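(* Let $P(z) \in \mathbb{C}[z, z^{-1}]$ be a Laurent polynomial with a root of order one at $z_0 = e^{2\pi i t_0}$ (where $t_0\in\mathbb{R}$), and let $P'$ denote its derivative with respect to $z$. Then for all sufficiently small $\delta > 0$, \[ \lim_{k\to\infty} \frac{1}{k!} \left| \int_{t_0-\delta}^{t_0+\delta} \log^k \left|P\left(e^{2\pi i t}\right)\right| \, dt \right| = \frac{1}{\pi \left|P'\left(e^{2\pi i t_0}\right)\right|}. \]
   Context: $\log^k x$ means $(\log x)^k$. *)

theory Defs
  imports "HOL-Analysis.Analysis" "HOL-Computational_Algebra.Polynomial"
begin

text \<open>A Laurent polynomial P in C[z, z^-1] is represented as P(z) = z^(-m) * Q(z)
  with Q a complex polynomial and m a natural number (every Laurent polynomial has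
  this form). As a function on C - {0}:\<close>
definition laurent_poly :: "complex poly \<Rightarrow> nat \<Rightarrow> complex \<Rightarrow> complex" where
  "laurent_poly Q m z = poly Q z / z ^ m"

text \<open>Order of the root of the Laurent polynomial z^(-m) Q(z) at a nonzero point z0:
  since z^(-m) is a unit near z0, it is the root multiplicity of Q at z0.\<close>
definition laurent_root_order :: "complex poly \<Rightarrow> nat \<Rightarrow> complex \<Rightarrow> nat" where
  "laurent_root_order Q m z0 = order z0 Q"

end

theory Submission
  imports Defs "HOL-Real_Asymp.Real_Asymp"
begin

text \<open>Near \<open>t0\<close> the function \<open>|P(e^{2\<pi>it})|\<close> behaves like \<open>C |t - t0|\<close> with
  \<open>C = 2\<pi> |P'(z0)|\<close>. For a linear function the integrals are explicit:
  \<open>\<integral>\<^sub>0\<^sup>\<epsilon> (-ln (c s))^k ds = k! \<epsilon> \<Sum>\<^bsub>j \<le> k\<^esub> (-ln (c \<epsilon>))^j / j!\<close>, which is asymptotic to \<open>k!/c\<close>.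
  Squeezing \<open>|P|\<close> between \<open>(C \<plusminus> r) |t - t0|\<close> on a short interval bounds each one-sided
  integral divided by \<open>k!\<close> between quantities tending to \<open>1/(C \<plusminus> r)\<close>, while the rest of the
  interval contributes \<open>O(M^k) = o(k!)\<close>. The two sides of \<open>t0\<close> add up to \<open>2/C\<close>.\<close>

text \<open>The primitive of \<open>s \<mapsto> (-ln (c s))^k\<close> vanishing at \<open>0\<close>; the recursion is integration
  by parts.\<close>
fun neg_ln_power_primitive :: "real \<Rightarrow> nat \<Rightarrow> real \<Rightarrow> real" where
  "neg_ln_power_primitive c 0 s = s"
| "neg_ln_power_primitive c (Suc k) s =
     s * (- ln (c * s)) ^ Suc k + real (Suc k) * neg_ln_power_primitive c k s"

lemma neg_ln_power_primitive_0 [simp]: "neg_ln_power_primitive c k 0 = 0"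
  by (induction k) auto

lemma has_real_derivative_neg_ln_power_primitive:
  assumes "c > 0" "s > 0"
  shows "(neg_ln_power_primitive c k has_real_derivative (- ln (c * s)) ^ k) (at s)"
proof (induction k)
  case 0
  then show ?case by (auto intro!: derivative_eq_intros)
next
  case (Suc k)
  have "((\<lambda>s. - ln (c * s)) has_real_derivative - 1 / s) (at s)"
    using assms by (auto intro!: derivative_eq_intros)
  from DERIV_mult[OF DERIV_ident DERIV_power_Suc[OF this]]
  have "((\<lambda>s. s * (- ln (c * s)) ^ Suc k) has_real_derivative
      (- ln (c * s)) ^ Suc k - real (Suc k) * (- ln (c * s)) ^ k) (at s)"
    by (rule DERIV_cong) (use assms in \<open>simp add: field_simps\<close>)
  from DERIV_add[OF this DERIV_cmult[OF Suc.IH, of "real (Suc k)"]] show ?case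
    by (simp add: algebra_simps)
qed

lemma tendsto_mult_neg_ln_power_at_right_0:
  fixes c :: real
  assumes "c > 0"
  shows "((\<lambda>s. s * (- ln (c * s)) ^ j) \<longlongrightarrow> 0) (at_right 0)"
proof -
  have "filterlim (\<lambda>s. c * s) (at_right 0) (at_right (0::real))"
    using assms by real_asymp
  from filterlim_compose[OF ln_at_0 this]
  have "filterlim (\<lambda>s. - ln (c * s)) at_top (at_right 0)"
    by (simp add: filterlim_uminus_at_top)
  from tendsto_mult_right_zero[OF filterlim_compose[OF tendsto_power_div_exp_0[of j] this], of "1 / c"]
  show ?thesis
  proof (rule Lim_transform_eventually)
    show "\<forall>\<^sub>F s in at_right 0. 1 / c * ((- ln (c * s)) ^ j / exp (- ln (c * s))) = s * (- ln (c * s)) ^ j"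
      using assms by (intro eventually_at_rightI[of 0 1]) (auto simp: exp_minus field_simps)
  qed
qed

lemma continuous_on_neg_ln_power_primitive:
  fixes c :: real
  assumes "c > 0"
  shows "continuous_on {0..} (neg_ln_power_primitive c k)"
proof -
  have "(neg_ln_power_primitive c k \<longlongrightarrow> 0) (at_right 0)"
  proof (induction k)
    case (Suc k)
    show ?case
      unfolding neg_ln_power_primitive.simps(2)[abs_def]
      by (rule tendsto_add_zero[OF tendsto_mult_neg_ln_power_at_right_0[OF assms]
            tendsto_mult_right_zero[OF Suc.IH]])
  qed (simp add: tendsto_ident_at)
  then have "continuous (at_right 0) (neg_ln_power_primitive c k)"
    by (simp add: continuous_within)
  moreover have "isCont (neg_ln_power_primitive c k) s" if "s > 0" for s
    using DERIV_isCont[OF has_real_derivative_neg_ln_power_primitive[OF assms that]] .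
  ultimately show ?thesis
    unfolding continuous_on_eq_continuous_within
    by (metis atLeast_iff at_within_Ici_at_right continuous_at_imp_continuous_at_within order_le_less)
qed

lemma has_integral_neg_ln_power:
  assumes "c > 0" "e \<ge> 0"
  shows "((\<lambda>s. (- ln (c * s)) ^ k) has_integral neg_ln_power_primitive c k e) {0..e}"
  using fundamental_theorem_of_calculus_interior[OF assms(2)
      continuous_on_subset[OF continuous_on_neg_ln_power_primitive[OF assms(1)]]
      has_real_derivative_neg_ln_power_primitive[OF assms(1),
        THEN has_real_derivative_iff_has_vector_derivative[THEN iffD1]]]
  by auto

lemma neg_ln_power_primitive_div_fact:
  "neg_ln_power_primitive c k s / fact k = s * (\<Sum>j\<le>k. (- ln (c * s)) ^ j / fact j)"
proof (induction k)
  case (Suc k)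
  have "neg_ln_power_primitive c (Suc k) s / fact (Suc k) =
      s * (- ln (c * s)) ^ Suc k / fact (Suc k) + neg_ln_power_primitive c k s / fact k"
    by (simp add: field_simps del: of_nat_Suc)
  with Suc.IH show ?case by (simp add: algebra_simps)
qed simp

lemma neg_ln_power_primitive_div_fact_tendsto:
  assumes "c > 0" "s > 0"
  shows "(\<lambda>k. neg_ln_power_primitive c k s / fact k) \<longlonglongrightarrow> 1 / c"
proof -
  define x where "x = - ln (c * s)"
  have "(\<lambda>n. \<Sum>j<n. x ^ j /\<^sub>R fact j) \<longlonglongrightarrow> exp x"
    using exp_converges[of x] by (simp add: sums_def)
  then have "(\<lambda>n. \<Sum>j<Suc n. x ^ j /\<^sub>R fact j) \<longlonglongrightarrow> exp x"
    by (rule LIMSEQ_Suc)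
  then have "(\<lambda>k. s * (\<Sum>j\<le>k. x ^ j / fact j)) \<longlonglongrightarrow> s * exp x"
    by (intro tendsto_mult_left) (simp add: lessThan_Suc_atMost divide_inverse_commute)
  moreover have "s * exp x = 1 / c"
    using assms by (simp add: x_def exp_minus field_simps)
  ultimately show ?thesis
    by (simp add: neg_ln_power_primitive_div_fact x_def)
qed

lemma neg_ln_power_antimono:
  fixes x y :: real
  assumes "0 < x" "x \<le> y" "y \<le> 1"
  shows "(- ln y) ^ k \<le> (- ln x) ^ k"
  using assms by (intro power_mono) auto

lemma integral_neg_ln_power_bounds:
  fixes h :: "real \<Rightarrow> real"
  assumes a: "0 < a" and \<epsilon>: "0 < \<epsilon>" "b * \<epsilon> \<le> 1"
    and cont: "continuous_on {0<..<\<epsilon>} h"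
    and bounds: "\<And>s. 0 < s \<Longrightarrow> s < \<epsilon> \<Longrightarrow> a * s \<le> h s \<and> h s \<le> b * s"
  shows "(\<lambda>s. (- ln (h s)) ^ k) integrable_on {0..\<epsilon>}"
    and "neg_ln_power_primitive b k \<epsilon> \<le> integral {0..\<epsilon>} (\<lambda>s. (- ln (h s)) ^ k)"
    and "integral {0..\<epsilon>} (\<lambda>s. (- ln (h s)) ^ k) \<le> neg_ln_power_primitive a k \<epsilon>"
proof -
  have "0 < a * (\<epsilon> / 2)" "a * (\<epsilon> / 2) \<le> h (\<epsilon> / 2)" "h (\<epsilon> / 2) \<le> b * (\<epsilon> / 2)"
    using a \<epsilon> bounds[of "\<epsilon> / 2"] by auto
  then have "0 < b * (\<epsilon> / 2)"
    by linarith
  then have b: "0 < b"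
    using \<epsilon> by (simp add: zero_less_mult_iff)
  have between: "0 < a * s \<and> a * s \<le> h s \<and> h s \<le> b * s \<and> b * s \<le> 1" if s: "s \<in> {0<..<\<epsilon>}" for s
  proof -
    have "0 < a * s" "a * s \<le> h s" "h s \<le> b * s"
      using a s bounds by auto
    moreover have "b * s \<le> b * \<epsilon>"
      using s b by (intro mult_left_mono) auto
    ultimately show ?thesis
      using \<epsilon> by linarith
  qed
  have compare: "(- ln (b * s)) ^ k \<le> (- ln (h s)) ^ k \<and> (- ln (h s)) ^ k \<le> (- ln (a * s)) ^ k"
    if "s \<in> {0<..<\<epsilon>}" for s
    using between[OF that] by (auto intro!: neg_ln_power_antimono)
  have primitive:
    "((\<lambda>s. (- ln (c * s)) ^ k) has_integral neg_ln_power_primitive c k \<epsilon>) {0<..<\<epsilon>}" if "c > 0" for c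
    using has_integral_neg_ln_power[OF that, of \<epsilon>] \<epsilon> by (simp add: has_integral_Icc_iff_Ioo)
  have "\<forall>s\<in>{0<..<\<epsilon>}. h s \<noteq> 0"
    using between by fastforce
  then have "continuous_on {0<..<\<epsilon>} (\<lambda>s. (- ln (h s)) ^ k)"
    by (intro continuous_intros cont)
  then have "(\<lambda>s. (- ln (h s)) ^ k) \<in> borel_measurable (lebesgue_on {0<..<\<epsilon>})"
    by (rule continuous_imp_measurable_on_sets_lebesgue) simp
  then have integrable: "(\<lambda>s. (- ln (h s)) ^ k) integrable_on {0<..<\<epsilon>}"
  proof (rule measurable_bounded_by_integrable_imp_integrable)
    show "(\<lambda>s. (- ln (a * s)) ^ k) integrable_on {0<..<\<epsilon>}"
      using primitive[OF a] by blast
    show "norm ((- ln (h s)) ^ k) \<le> (- ln (a * s)) ^ k" if "s \<in> {0<..<\<epsilon>}" for s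
      using compare[OF that] between[OF that] by (simp add: power_abs)
  qed simp
  then show "(\<lambda>s. (- ln (h s)) ^ k) integrable_on {0..\<epsilon>}"
    by (simp add: integrable_on_Icc_iff_Ioo)
  show "neg_ln_power_primitive b k \<epsilon> \<le> integral {0..\<epsilon>} (\<lambda>s. (- ln (h s)) ^ k)"
    unfolding integral_open_interval_real
    by (rule has_integral_le[OF primitive[OF b] integrable_integral[OF integrable]])
      (use compare in blast)
  show "integral {0..\<epsilon>} (\<lambda>s. (- ln (h s)) ^ k) \<le> neg_ln_power_primitive a k \<epsilon>"
    unfolding integral_open_interval_real
    by (rule has_integral_le[OF integrable_integral[OF integrable] primitive[OF a]])
      (use compare in blast)
qed

lemma integral_power_div_fact_tendsto_0:
  fixes f :: "real \<Rightarrow> real"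
  assumes "continuous_on {a..b} f"
  shows "(\<lambda>k. integral {a..b} (\<lambda>t. f t ^ k) / fact k) \<longlonglongrightarrow> 0"
proof (cases "a \<le> b")
  case True
  obtain B where B: "\<And>t. t \<in> {a..b} \<Longrightarrow> \<bar>f t\<bar> \<le> B"
    using continuous_on_compact_bound[OF compact_Icc assms] by auto
  have bound: "norm (integral {a..b} (\<lambda>t. f t ^ k) / fact k) \<le> (b - a) * (inverse (fact k) * B ^ k)" for k
  proof -
    have "norm (f t ^ k) \<le> B ^ k" if "t \<in> {a..b}" for t
      using power_mono[OF B[OF that] abs_ge_zero] by (simp add: power_abs)
    then have "norm (integral {a..b} (\<lambda>t. f t ^ k)) \<le> B ^ k * (b - a)"
      by (intro integral_bound True continuous_intros assms)
    then show ?thesis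
      by (simp add: divide_simps mult_ac)
  qed
  show ?thesis
    by (rule Lim_null_comparison[OF always_eventually[OF allI[OF bound]]])
      (intro tendsto_mult_right_zero summable_LIMSEQ_zero summable_exp)
qed simp

lemma tendsto_sandwich_family:
  fixes a :: "nat \<Rightarrow> real" and lo up :: "'a \<Rightarrow> real"
  assumes "F \<noteq> bot" "(lo \<longlongrightarrow> l) F" "(up \<longlongrightarrow> l) F"
    and bounds: "\<forall>\<^sub>F r in F. \<exists>L U. L \<longlonglongrightarrow> lo r \<and> U \<longlonglongrightarrow> up r \<and>
        (\<forall>\<^sub>F k in sequentially. L k \<le> a k \<and> a k \<le> U k)"
  shows "a \<longlonglongrightarrow> l"
proof (rule order_tendstoI)
  fix y assume "y < l"
  from eventually_conj[OF order_tendstoD(1)[OF assms(2) this] bounds]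
  obtain r L U where "y < lo r" "L \<longlonglongrightarrow> lo r"
      "\<forall>\<^sub>F k in sequentially. L k \<le> a k \<and> a k \<le> U k"
    using eventually_happens'[OF assms(1)] by blast
  from eventually_conj[OF order_tendstoD(1)[OF this(2,1)] this(3)]
  show "\<forall>\<^sub>F k in sequentially. y < a k"
    by (rule eventually_mono) auto
next
  fix y assume "l < y"
  from eventually_conj[OF order_tendstoD(2)[OF assms(3) this] bounds]
  obtain r L U where "up r < y" "U \<longlonglongrightarrow> up r"
      "\<forall>\<^sub>F k in sequentially. L k \<le> a k \<and> a k \<le> U k"
    using eventually_happens'[OF assms(1)] by blast
  from eventually_conj[OF order_tendstoD(2)[OF this(2,1)] this(3)]
  show "\<forall>\<^sub>F k in sequentially. a k < y"
    by (rule eventually_mono) auto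
qed

lemma linear_bounds_near_0:
  fixes h :: "real \<Rightarrow> real"
  assumes lim: "((\<lambda>s. h s / s) \<longlongrightarrow> c) (at_right 0)" and r: "0 < r" "r < c" and "\<delta> > 0"
  obtains \<epsilon> where "0 < \<epsilon>" "\<epsilon> \<le> \<delta>" "(c + r) * \<epsilon> \<le> 1"
    and "\<And>s. 0 < s \<Longrightarrow> s < \<epsilon> \<Longrightarrow> (c - r) * s \<le> h s \<and> h s \<le> (c + r) * s"
proof -
  have below: "\<forall>\<^sub>F s in at_right 0. s < x" if "0 < x" for x :: real
    using that unfolding eventually_at_right_field by blast
  have "\<forall>\<^sub>F s in at_right 0. c - r < h s / s \<and> h s / s < c + r \<and> s < \<delta> \<and> s < 1 / (c + r)"
    using order_tendstoD[OF lim, of "c - r"] order_tendstoD[OF lim, of "c + r"] r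
    by (intro eventually_conj below \<open>\<delta> > 0\<close>) auto
  then obtain \<epsilon>0 where "\<epsilon>0 > 0" and \<epsilon>0: "\<And>s. 0 < s \<Longrightarrow> s < \<epsilon>0 \<Longrightarrow>
      c - r < h s / s \<and> h s / s < c + r \<and> s < \<delta> \<and> s < 1 / (c + r)"
    unfolding eventually_at_right_field by auto
  show ?thesis
  proof
    show "0 < \<epsilon>0 / 2" "\<epsilon>0 / 2 \<le> \<delta>" "(c + r) * (\<epsilon>0 / 2) \<le> 1"
      using \<epsilon>0[of "\<epsilon>0 / 2"] \<open>\<epsilon>0 > 0\<close> r by (auto simp: field_simps)
    show "(c - r) * s \<le> h s \<and> h s \<le> (c + r) * s" if "0 < s" "s < \<epsilon>0 / 2" for s
      using \<epsilon>0[of s] that by (auto simp: field_simps)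
  qed
qed

lemma continuous_on_neg_ln_Icc:
  fixes h :: "real \<Rightarrow> real"
  assumes "continuous_on {0<..\<delta>} h" "\<And>s. 0 < s \<Longrightarrow> s \<le> \<delta> \<Longrightarrow> 0 < h s" "0 < \<epsilon>"
  shows "continuous_on {\<epsilon>..\<delta>} (\<lambda>s. - ln (h s))"
proof -
  have "\<forall>s\<in>{\<epsilon>..\<delta>}. h s \<noteq> 0"
    using assms(2,3) by (metis atLeastAtMost_iff less_irrefl order_less_le_trans)
  with assms(1,3) show ?thesis
    by (intro continuous_intros continuous_on_subset[OF assms(1)]) auto
qed

context
  fixes h :: "real \<Rightarrow> real" and c \<delta> :: real
  assumes c: "c > 0" and \<delta>: "\<delta> > 0"
    and cont: "continuous_on {0<..\<delta>} h"
    and pos: "\<And>s. 0 < s \<Longrightarrow> s \<le> \<delta> \<Longrightarrow> 0 < h s"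
    and lim: "((\<lambda>s. h s / s) \<longlongrightarrow> c) (at_right 0)"
begin

lemma integrable_neg_ln_power: "(\<lambda>s. (- ln (h s)) ^ k) integrable_on {0..\<delta>}"
proof -
  obtain \<epsilon> where \<epsilon>: "0 < \<epsilon>" "\<epsilon> \<le> \<delta>" "(c + c / 2) * \<epsilon> \<le> 1"
    and bounds: "\<And>s. 0 < s \<Longrightarrow> s < \<epsilon> \<Longrightarrow> (c - c / 2) * s \<le> h s \<and> h s \<le> (c + c / 2) * s"
    using linear_bounds_near_0[OF lim _ _ \<delta>, of "c / 2"] c by auto
  have "0 < c - c / 2" "continuous_on {0<..<\<epsilon>} h"
    using c \<epsilon> by (auto intro: continuous_on_subset[OF cont])
  from integral_neg_ln_power_bounds(1)[OF this(1) \<epsilon>(1,3) this(2) bounds]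
    integrable_continuous_real[OF continuous_on_power[OF continuous_on_neg_ln_Icc[OF cont pos \<epsilon>(1)]]]
  show ?thesis
    by (rule Henstock_Kurzweil_Integration.integrable_combine[rotated 2]) (use \<epsilon> in auto)
qed

lemma tendsto_integral_neg_ln_power_div_fact:
  "(\<lambda>k. integral {0..\<delta>} (\<lambda>s. (- ln (h s)) ^ k) / fact k) \<longlonglongrightarrow> 1 / c"
proof (rule tendsto_sandwich_family[of "at_right 0" "\<lambda>r. 1 / (c + r)" _ "\<lambda>r. 1 / (c - r)"])
  show "((\<lambda>r. 1 / (c + r)) \<longlongrightarrow> 1 / c) (at_right 0)"
    "((\<lambda>r. 1 / (c - r)) \<longlongrightarrow> 1 / c) (at_right 0)"
    using c by (auto intro!: tendsto_eq_intros)
  define I where "I k = integral {0..\<delta>} (\<lambda>s. (- ln (h s)) ^ k) / fact k" for k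
  have squeeze: "\<exists>L U. L \<longlonglongrightarrow> 1 / (c + r) \<and> U \<longlonglongrightarrow> 1 / (c - r) \<and>
      (\<forall>\<^sub>F k in sequentially. L k \<le> I k \<and> I k \<le> U k)" if r: "0 < r" "r < c" for r
  proof -
    obtain \<epsilon> where \<epsilon>: "0 < \<epsilon>" "\<epsilon> \<le> \<delta>" "(c + r) * \<epsilon> \<le> 1"
      and bounds: "\<And>s. 0 < s \<Longrightarrow> s < \<epsilon> \<Longrightarrow> (c - r) * s \<le> h s \<and> h s \<le> (c + r) * s"
      using linear_bounds_near_0[OF lim r \<delta>] by blast
    have "0 < c - r" "continuous_on {0<..<\<epsilon>} h"
      using r \<epsilon> by (auto intro: continuous_on_subset[OF cont])
    note inner = integral_neg_ln_power_bounds[OF this(1) \<epsilon>(1,3) this(2) bounds]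
    define B where "B k = integral {\<epsilon>..\<delta>} (\<lambda>s. (- ln (h s)) ^ k) / fact k" for k
    have tail: "B \<longlonglongrightarrow> 0"
      unfolding B_def
      by (rule integral_power_div_fact_tendsto_0[OF continuous_on_neg_ln_Icc[OF cont pos \<epsilon>(1)]])
    have split: "I k = integral {0..\<epsilon>} (\<lambda>s. (- ln (h s)) ^ k) / fact k + B k" for k
      using Henstock_Kurzweil_Integration.integral_combine[OF _ _ integrable_neg_ln_power, of \<epsilon> k] \<epsilon>
      by (simp add: I_def B_def add_divide_distrib[symmetric])
    show ?thesis
    proof (intro exI conjI)
      show "(\<lambda>k. neg_ln_power_primitive (c + r) k \<epsilon> / fact k + B k) \<longlonglongrightarrow> 1 / (c + r)"
        using tendsto_add[OF neg_ln_power_primitive_div_fact_tendsto tail] \<epsilon> r c by simp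
      show "(\<lambda>k. neg_ln_power_primitive (c - r) k \<epsilon> / fact k + B k) \<longlonglongrightarrow> 1 / (c - r)"
        using tendsto_add[OF neg_ln_power_primitive_div_fact_tendsto tail] \<epsilon> r by simp
      show "\<forall>\<^sub>F k in sequentially.
          neg_ln_power_primitive (c + r) k \<epsilon> / fact k + B k \<le> I k \<and>
          I k \<le> neg_ln_power_primitive (c - r) k \<epsilon> / fact k + B k"
        using inner(2,3) by (auto simp: split divide_right_mono)
    qed
  qed
  have "\<forall>\<^sub>F r in at_right 0. r < c"
    using c by (auto simp: eventually_at_right_field)
  then show "\<forall>\<^sub>F r in at_right 0. \<exists>L U. L \<longlonglongrightarrow> 1 / (c + r) \<and> U \<longlonglongrightarrow> 1 / (c - r) \<and>
      (\<forall>\<^sub>F k in sequentially. L k \<le> I k \<and> I k \<le> U k)"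
    using eventually_at_right_less by (rule eventually_elim2) (use squeeze in blast)
qed simp

end

lemma poly_pderiv_nonzero_if_order_eq_1:
  fixes p :: "'a::{idom,semiring_char_0} poly"
  assumes "p \<noteq> 0" "order a p = 1"
  shows "poly (pderiv p) a \<noteq> 0"
proof
  assume pderiv_root: "poly (pderiv p) a = 0"
  have "poly p a = 0"
    using assms order_root[of p a] by auto
  with \<open>p \<noteq> 0\<close> have "order a (pderiv p) = 0"
    using order_pderiv assms by fastforce
  with pderiv_root have "pderiv p = 0"
    by (simp add: order_root)
  then obtain c where "p = [:c:]"
    by (metis degree_eq_zeroE pderiv_eq_0_iff)
  with \<open>p \<noteq> 0\<close> \<open>poly p a = 0\<close> show False
    by simp
qed

lemma has_field_derivative_laurent_poly_at_root:
  assumes "poly Q z = 0" "z \<noteq> 0"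
  shows "(laurent_poly Q m has_field_derivative poly (pderiv Q) z / z ^ m) (at z)"
  unfolding laurent_poly_def[abs_def]
  by (rule DERIV_cong[OF DERIV_divide[OF poly_DERIV DERIV_power[OF DERIV_ident]]])
    (use assms in simp_all)

lemma tendsto_norm_div_dist_has_vector_derivative:
  fixes \<phi> :: "real \<Rightarrow> 'a::real_normed_vector"
  assumes deriv: "(\<phi> has_vector_derivative D) (at t0)" and root: "\<phi> t0 = 0"
  shows "((\<lambda>t. norm (\<phi> t) / \<bar>t - t0\<bar>) \<longlongrightarrow> norm D) (at t0)"
proof -
  have remainder: "((\<lambda>t. norm (\<phi> t - (t - t0) *\<^sub>R D) / \<bar>t - t0\<bar>) \<longlongrightarrow> 0) (at t0)"
    using deriv root by (simp add: has_vector_derivative_def has_derivative_iff_norm)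
  have "\<bar>norm (\<phi> t) / \<bar>t - t0\<bar> - norm D\<bar> \<le> norm (\<phi> t - (t - t0) *\<^sub>R D) / \<bar>t - t0\<bar>"
    if "t \<noteq> t0" for t
  proof -
    have "norm (\<phi> t) / \<bar>t - t0\<bar> - norm D = (norm (\<phi> t) - norm ((t - t0) *\<^sub>R D)) / \<bar>t - t0\<bar>"
      using that by (simp add: diff_divide_distrib)
    also have "\<bar>\<dots>\<bar> \<le> norm (\<phi> t - (t - t0) *\<^sub>R D) / \<bar>t - t0\<bar>"
      unfolding abs_divide abs_abs by (rule divide_right_mono[OF norm_triangle_ineq3]) simp
    finally show ?thesis .
  qed
  then have "((\<lambda>t. norm (\<phi> t) / \<bar>t - t0\<bar> - norm D) \<longlongrightarrow> 0) (at t0)"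
    by (intro Lim_null_comparison[OF _ remainder]) (auto simp: eventually_at_filter)
  then show ?thesis
    by (rule LIM_zero_cancel)
qed

lemma tendsto_integral_ln_power_div_fact_Icc:
  fixes g :: "real \<Rightarrow> real"
  assumes C: "C > 0" and \<delta>: "\<delta> > 0"
    and cont: "continuous_on {t0 - \<delta>..t0 + \<delta>} g"
    and pos: "\<And>t. t \<in> {t0 - \<delta>..t0 + \<delta>} \<Longrightarrow> t \<noteq> t0 \<Longrightarrow> 0 < g t"
    and lim: "((\<lambda>t. g t / \<bar>t - t0\<bar>) \<longlongrightarrow> C) (at t0)"
  shows "(\<lambda>k. \<bar>integral {t0 - \<delta>..t0 + \<delta>} (\<lambda>t. ln (g t) ^ k)\<bar> / fact k) \<longlonglongrightarrow> 2 / C"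
proof -
  define F where "F k t = (- ln (g t)) ^ k" for k t
  define I where "I \<sigma> k = integral {0..\<delta>} (\<lambda>s. F k (t0 + \<sigma> * s))" for \<sigma> k
  have one_side: "((\<lambda>s. F k (t0 + \<sigma> * s)) has_integral I \<sigma> k) {0..\<delta>}
      \<and> (\<lambda>k. I \<sigma> k / fact k) \<longlonglongrightarrow> 1 / C" if \<sigma>: "\<sigma> = 1 \<or> \<sigma> = -1" for \<sigma> k
  proof -
    define h where "h s = g (t0 + \<sigma> * s)" for s
    have into: "t0 + \<sigma> * s \<in> {t0 - \<delta>..t0 + \<delta>}" if "0 \<le> s" "s \<le> \<delta>" for s
      using \<sigma> that by auto
    have hc: "continuous_on {0<..\<delta>} h"
      unfolding h_def
      by (rule continuous_on_compose2[OF cont]) (auto intro!: continuous_intros into)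
    have hp: "0 < h s" if "0 < s" "s \<le> \<delta>" for s
      unfolding h_def using into[of s] that \<sigma> by (intro pos) auto
    have hl: "((\<lambda>s. h s / s) \<longlongrightarrow> C) (at_right 0)"
    proof -
      have "filterlim (\<lambda>s. t0 + \<sigma> * s) (at t0) (at_right 0)"
        using \<sigma> unfolding filterlim_at
        by (auto intro!: tendsto_eq_intros eventually_mono[OF eventually_at_right_less])
      from filterlim_compose[OF lim this] show ?thesis
        by (rule Lim_transform_eventually)
          (use \<sigma> in \<open>auto simp: h_def intro!: eventually_mono[OF eventually_at_right_less]\<close>)
    qed
    show ?thesis
      using integrable_integral[OF integrable_neg_ln_power[OF C \<delta> hc hp hl]]
        tendsto_integral_neg_ln_power_div_fact[OF C \<delta> hc hp hl]
      by (simp add: I_def F_def h_def)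
  qed
  have halves: "(F k has_integral I (-1) k + I 1 k) {t0 - \<delta>..t0 + \<delta>}" for k
  proof (rule has_integral_combine)
    show "(F k has_integral I 1 k) {t0..t0 + \<delta>}"
      using one_side[of 1 k] has_integral_shift_real_ivl_iff[of "F k" _ t0 "t0 + \<delta>" t0]
      by (simp add: add.commute)
    have "((\<lambda>s. F k (t0 - s)) has_integral I (-1) k) {0..\<delta>}"
      using one_side[of "-1" k] by simp
    then have "((\<lambda>s. F k (s + t0)) has_integral I (-1) k) {-\<delta>..0}"
      using has_integral_reflect_real[of "\<lambda>s. F k (t0 - s)" _ \<delta> 0] by (simp add: add.commute)
    then show "(F k has_integral I (-1) k) {t0 - \<delta>..t0}"
      using has_integral_shift_real_ivl_iff[of "F k" _ "t0 - \<delta>" t0 t0] by simp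
  qed (use \<delta> in auto)
  have "\<bar>integral {t0 - \<delta>..t0 + \<delta>} (\<lambda>t. ln (g t) ^ k)\<bar> = \<bar>I (-1) k + I 1 k\<bar>" for k
  proof -
    have "ln (g t) ^ k = (-1) ^ k * F k t" for t
      unfolding F_def power_mult_distrib[symmetric] by simp
    then show ?thesis
      by (simp add: integral_unique[OF halves] abs_mult)
  qed
  moreover have "(\<lambda>k. \<bar>I (-1) k + I 1 k\<bar> / fact k) \<longlonglongrightarrow> 2 / C"
    using tendsto_rabs[OF tendsto_add[OF one_side[of "-1", THEN conjunct2]
        one_side[of 1, THEN conjunct2]]] C
    by (simp add: add_divide_distrib[symmetric] abs_divide)
  ultimately show ?thesis
    by simp
qed

corollary tendsto_integral_ln_power_div_fact_small_Icc:
  fixes g :: "real \<Rightarrow> real"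
  assumes C: "C > 0" and cont: "continuous_on UNIV g"
    and lim: "((\<lambda>t. g t / \<bar>t - t0\<bar>) \<longlongrightarrow> C) (at t0)"
  shows "\<exists>\<delta>0>0. \<forall>\<delta>. 0 < \<delta> \<and> \<delta> < \<delta>0 \<longrightarrow>
    (\<lambda>k. \<bar>integral {t0 - \<delta>..t0 + \<delta>} (\<lambda>t. ln (g t) ^ k)\<bar> / fact k) \<longlonglongrightarrow> 2 / C"
proof -
  from order_tendstoD(1)[OF lim C] obtain \<delta>0 where "\<delta>0 > 0"
    and g_pos: "\<And>t. t \<noteq> t0 \<Longrightarrow> dist t t0 < \<delta>0 \<Longrightarrow> 0 < g t / \<bar>t - t0\<bar>"
    unfolding eventually_at by auto
  have "(\<lambda>k. \<bar>integral {t0 - \<delta>..t0 + \<delta>} (\<lambda>t. ln (g t) ^ k)\<bar> / fact k) \<longlonglongrightarrow> 2 / C"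
    if \<delta>: "0 < \<delta>" "\<delta> < \<delta>0" for \<delta>
  proof (rule tendsto_integral_ln_power_div_fact_Icc[OF C \<delta>(1) continuous_on_subset[OF cont] _ lim])
    show "0 < g t" if "t \<in> {t0 - \<delta>..t0 + \<delta>}" "t \<noteq> t0" for t
      using g_pos[of t] that \<delta> by (auto simp: dist_real_def zero_less_divide_iff)
  qed simp
  with \<open>\<delta>0 > 0\<close> show ?thesis
    by blast
qed

lemma laurent_poly_on_circle_near_simple_root:
  fixes Q :: "complex poly" and t0 :: real
  defines "z0 \<equiv> exp (2 * pi * \<i> * of_real t0)"
  assumes "Q \<noteq> 0" "order z0 Q = 1"
  shows "((\<lambda>t. cmod (laurent_poly Q m (exp (2 * pi * \<i> * of_real t))) / \<bar>t - t0\<bar>)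
      \<longlongrightarrow> 2 * pi * cmod (deriv (laurent_poly Q m) z0)) (at t0)"
    and "deriv (laurent_poly Q m) z0 \<noteq> 0"
proof -
  define D where "D = poly (pderiv Q) z0 / z0 ^ m"
  have z0: "z0 \<noteq> 0" "cmod z0 = 1"
    by (simp_all add: z0_def norm_exp_eq_Re)
  have root: "poly Q z0 = 0"
    using assms(2,3) order_root by fastforce
  have dP: "(laurent_poly Q m has_field_derivative D) (at z0)"
    unfolding D_def by (rule has_field_derivative_laurent_poly_at_root[OF root z0(1)])
  then show "deriv (laurent_poly Q m) z0 \<noteq> 0"
    using poly_pderiv_nonzero_if_order_eq_1[OF assms(2,3)] z0 by (simp add: DERIV_imp_deriv D_def)
  have "((\<lambda>w. exp (2 * pi * \<i> * w)) has_field_derivative z0 * (2 * pi * \<i>)) (at (of_real t0))"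
    unfolding z0_def by (auto intro!: derivative_eq_intros)
  from DERIV_chain2[OF dP[unfolded z0_def] this[unfolded z0_def]]
  have "((\<lambda>w. laurent_poly Q m (exp (2 * pi * \<i> * w))) has_field_derivative D * (z0 * (2 * pi * \<i>)))
      (at (of_real t0))"
    by (simp add: z0_def)
  then have "((\<lambda>t. cmod (laurent_poly Q m (exp (2 * pi * \<i> * of_real t))) / \<bar>t - t0\<bar>)
      \<longlongrightarrow> cmod (D * (z0 * (2 * pi * \<i>)))) (at t0)"
    by (intro tendsto_norm_div_dist_has_vector_derivative has_vector_derivative_real_field)
      (use root in \<open>simp_all add: laurent_poly_def z0_def\<close>)
  then show "((\<lambda>t. cmod (laurent_poly Q m (exp (2 * pi * \<i> * of_real t))) / \<bar>t - t0\<bar>)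
      \<longlongrightarrow> 2 * pi * cmod (deriv (laurent_poly Q m) z0)) (at t0)"
    using DERIV_imp_deriv[OF dP] z0 by (simp add: norm_mult mult.commute)
qed

theorem lemma4:
  fixes Q :: "complex poly" and m :: nat and t0 :: real
  defines "P \<equiv> laurent_poly Q m"
  assumes "Q \<noteq> 0"
    and "laurent_root_order Q m (exp (2 * pi * \<i> * of_real t0)) = 1"
  shows "\<exists>\<delta>0>0. \<forall>\<delta>. 0 < \<delta> \<and> \<delta> < \<delta>0 \<longrightarrow>
    ((\<lambda>k. \<bar>integral {t0 - \<delta>..t0 + \<delta>}
              (\<lambda>t. (ln (cmod (P (exp (2 * pi * \<i> * of_real t))))) ^ k)\<bar> / fact k)
      \<longlonglongrightarrow> 1 / (pi * cmod (deriv P (exp (2 * pi * \<i> * of_real t0)))))"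
proof -
  define C where "C = 2 * pi * cmod (deriv P (exp (2 * pi * \<i> * of_real t0)))"
  note near_root = laurent_poly_on_circle_near_simple_root[OF assms(2)
      assms(3)[unfolded laurent_root_order_def], of m, folded P_def]
  have "C > 0"
    using near_root(2) by (simp add: C_def)
  moreover have "continuous_on UNIV (\<lambda>t. cmod (P (exp (2 * pi * \<i> * of_real t))))"
    unfolding P_def laurent_poly_def by (intro continuous_intros) auto
  ultimately have "\<exists>\<delta>0>0. \<forall>\<delta>. 0 < \<delta> \<and> \<delta> < \<delta>0 \<longrightarrow>
      (\<lambda>k. \<bar>integral {t0 - \<delta>..t0 + \<delta>} (\<lambda>t. ln (cmod (P (exp (2 * pi * \<i> * of_real t)))) ^ k)\<bar>
        / fact k) \<longlonglongrightarrow> 2 / C"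
    by (intro tendsto_integral_ln_power_div_fact_small_Icc) (use near_root(1) in \<open>simp_all add: C_def\<close>)
  then show ?thesis
    by (simp add: C_def)
qed

end
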